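(* Let $\mathcal{H}$ be a hypothesis class with Littlestone dimension $d<\infty$, and let $k\ge0$, $l\ge0$ be integers with $k\ge l+d$. Then \[ \mathrm{ELdim}(\mathcal{H}^l,k)\le (k+1)\, e^{\frac{2k+2}{k+1-l-d}}. \]
   Context: Hypotheses are maps $\mathcal{X}\to\{-1,+1\}$. The Littlestone dimension of $\mathcal{H}$ is the largest $d$ such that there is a complete binary tree of depth $d$ with internal nodes labeled by points of $\mathcal{X}$ such that every root-to-leaf path (left = label $-1$, right = $+1$) is agreed with by some $h\in\mathcal{H}$. $\mathcal{C}^l$ is the class of functions $x\mapsto1-2I(x\in D)$ with $D\subseteq\mathcal{X}$, $|D|\le l$; $\mathcal{H}^l=\{x\mapsto h(x)c(x):h\in\mathcal{H},c\in\mathcal{C}^l\}$. Extended mistake tree w.r.t. a class $\mathcal{F}$: a finite full binary tree (possibly a single leaf) in which each internal node $v$ is labeled by $x_v\in\mathcal{X}$ and has two solid downward edges, to its left child (label $-1$) and right child (label $+1$), plus one dashed downward edge to one of its two children; each leaf is labeled by some $h\in\mathcal{F}$ with $h(x_v)$ equal to the direction label at every internal node $v$ on the root-to-leaf path. A root-to-leaf path chooses at each internal node one downward edge; its length is its number of edges. The tree is $(k,m)$-difficult if every root-to-leaf path using at most $k$ solid edges has length at least $m$. $\mathrm{ELdim}(\mathcal{F},k)$ is the supremum of $m$ such that a $(k,m)$-difficult extended mistake tree w.r.t. $\mathcal{F}$ exists. *)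

theory Defs
  imports "HOL-Analysis.Analysis" "HOL-Library.Extended_Nat" "HOL-Library.Extended_Real"
begin

text \<open>Hypotheses are maps 'x \<Rightarrow> int taking values in {-1,+1}.\<close>

datatype 'x ltree = LLeaf | LNode 'x "'x ltree" "'x ltree"

fun lbranches :: "'x ltree \<Rightarrow> ('x \<times> int) list set" where
  "lbranches LLeaf = {[]}"
| "lbranches (LNode x l r) =
     {(x, -1) # p | p. p \<in> lbranches l} \<union> {(x, 1) # p | p. p \<in> lbranches r}"

definition lcomplete :: "nat \<Rightarrow> 'x ltree \<Rightarrow> bool" where
  "lcomplete d t \<longleftrightarrow> (\<forall>p\<in>lbranches t. length p = d)"

definition lshattered :: "('x \<Rightarrow> int) set \<Rightarrow> 'x ltree \<Rightarrow> bool" where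
  "lshattered H t \<longleftrightarrow> (\<forall>p\<in>lbranches t. \<exists>h\<in>H. \<forall>(x, y)\<in>set p. h x = y)"

definition Ldim :: "('x \<Rightarrow> int) set \<Rightarrow> enat" where
  "Ldim H = Sup {enat d | d. \<exists>t. lcomplete d t \<and> lshattered H t}"

definition Cl :: "nat \<Rightarrow> ('x \<Rightarrow> int) set" where
  "Cl l = {(\<lambda>x. 1 - 2 * (if x \<in> D then 1 else 0)) | D. finite D \<and> card D \<le> l}"

definition Hl :: "('x \<Rightarrow> int) set \<Rightarrow> nat \<Rightarrow> ('x \<Rightarrow> int) set" where
  "Hl H l = {(\<lambda>x. h x * c x) | h c. h \<in> H \<and> c \<in> Cl l}"

text \<open>ENode x b L R: internal node labelled x with left child L (label -1), right child R
  (label +1), and a dashed edge to R if b, to L otherwise. Leaves carry a hypothesis.\<close>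
datatype 'x etree = ELeaf "'x \<Rightarrow> int" | ENode 'x bool "'x etree" "'x etree"

fun evalid :: "('x \<Rightarrow> int) set \<Rightarrow> ('x \<times> int) list \<Rightarrow> 'x etree \<Rightarrow> bool" where
  "evalid F cs (ELeaf h) \<longleftrightarrow> h \<in> F \<and> (\<forall>(x, y)\<in>set cs. h x = y)"
| "evalid F cs (ENode x b l r) \<longleftrightarrow> evalid F ((x, -1) # cs) l \<and> evalid F ((x, 1) # cs) r"

definition ext_mistake_tree :: "('x \<Rightarrow> int) set \<Rightarrow> 'x etree \<Rightarrow> bool" where
  "ext_mistake_tree F t \<longleftrightarrow> evalid F [] t"

datatype edge = SolidL | SolidR | Dashed

fun epaths :: "'x etree \<Rightarrow> edge list set" where
  "epaths (ELeaf h) = {[]}"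
| "epaths (ENode x b l r) =
     {SolidL # p | p. p \<in> epaths l} \<union> {SolidR # p | p. p \<in> epaths r}
     \<union> {Dashed # p | p. p \<in> epaths (if b then r else l)}"

definition num_solid :: "edge list \<Rightarrow> nat" where
  "num_solid p = length (filter (\<lambda>e. e \<noteq> Dashed) p)"

definition difficult :: "nat \<Rightarrow> nat \<Rightarrow> 'x etree \<Rightarrow> bool" where
  "difficult k m t \<longleftrightarrow> (\<forall>p\<in>epaths t. num_solid p \<le> k \<longrightarrow> m \<le> length p)"

definition ELdim :: "('x \<Rightarrow> int) set \<Rightarrow> nat \<Rightarrow> enat" where
  "ELdim F k = Sup {enat m | m. \<exists>t. ext_mistake_tree F t \<and> difficult k m t}"

end

theory Submission
  imports Defs
begin

text \<open>Let t be a (k,M)-difficult extended mistake tree for H^l and count the nodes of its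
  depth-m frontier (leaves of depth below m count once). Along any branch the dashed edge is
  free while solid edges are limited, so Pascal's rule gives at least
  \<Phi>_{k+1}(m) = \<Sum>_{i\<le>k+1} (m choose i) frontier nodes for m \<le> M. Conversely, a hypothesis h\<sqdot>c of
  H^l reaching a frontier node disagrees with h on at most l of the node labels, and splitting
  H at each node decreases the standard-optimal-algorithm potential \<Phi>_{Ldim}; combining both
  budgets bounds the frontier by \<Phi>_l(m)\<sqdot>\<Phi>_d(m). Finally
  \<Phi>_r(M)\<sqdot>(K/M)^r \<le> (1 + K/M)^M \<le> e^K for r \<le> K \<le> M, together with (M/K)^K \<le> (M choose K) and
  K = k + 1, turns \<Phi>_K(M) \<le> \<Phi>_l(M)\<sqdot>\<Phi>_d(M) into M \<le> K\<sqdot>e^{2K/(K-l-d)}.\<close>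

section \<open>Partial sums of binomial coefficients\<close>

text \<open>The index is an integer so that Pascal's rule may step below 0, where the sum is empty.\<close>
fun choose_sum :: "int \<Rightarrow> nat \<Rightarrow> nat" where
  "choose_sum r 0 = (if r < 0 then 0 else 1)"
| "choose_sum r (Suc m) = choose_sum r m + choose_sum (r - 1) m"

lemma choose_sum_neg: "r < 0 \<Longrightarrow> choose_sum r m = 0"
  by (induction m arbitrary: r) auto

lemma choose_sum_mono: "r \<le> r' \<Longrightarrow> choose_sum r m \<le> choose_sum r' m"
proof (induction m arbitrary: r r')
  case (Suc m)
  then have "choose_sum r m \<le> choose_sum r' m" "choose_sum (r - 1) m \<le> choose_sum (r' - 1) m"
    by auto
  then show ?case by simp
qed auto

lemma choose_sum_pos: "0 \<le> r \<Longrightarrow> 1 \<le> choose_sum r m"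
proof (induction m arbitrary: r)
  case (Suc m)
  then have "1 \<le> choose_sum r m" by simp
  then show ?case by simp
qed simp

lemma choose_sum_eq_sum: "choose_sum (int r) m = (\<Sum>i\<le>r. m choose i)"
proof (induction m arbitrary: r)
  case 0
  then show ?case by (induction r) simp_all
next
  case (Suc m)
  show ?case
  proof (cases r)
    case 0
    then show ?thesis using Suc.IH[of 0] by (simp add: choose_sum_neg)
  next
    case (Suc r')
    have "(\<Sum>i\<le>r. Suc m choose i) = 1 + (\<Sum>i\<le>r'. m choose i) + (\<Sum>i\<le>r'. m choose Suc i)"
      unfolding Suc by (subst sum.atMost_Suc_shift) (simp add: sum.distrib)
    moreover have "(\<Sum>i\<le>r. m choose i) = 1 + (\<Sum>i\<le>r'. m choose Suc i)"
      unfolding Suc by (subst sum.atMost_Suc_shift) simp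
    moreover have "choose_sum (int r) (Suc m) = choose_sum (int r) m + choose_sum (int r') m"
      using Suc by simp
    ultimately show ?thesis using Suc.IH[of r] Suc.IH[of r'] by linarith
  qed
qed

lemma choose_sum_mult_power_le_exp:
  fixes q :: real
  assumes "0 \<le> q" "q \<le> 1" "r \<le> M"
  shows "real (choose_sum (int r) M) * q ^ r \<le> exp (q * real M)"
proof -
  have "real (choose_sum (int r) M) * q ^ r = (\<Sum>i\<le>r. real (M choose i) * q ^ r)"
    by (simp add: choose_sum_eq_sum sum_distrib_right)
  also have "\<dots> \<le> (\<Sum>i\<le>r. real (M choose i) * q ^ i)"
    by (rule sum_mono) (use assms in \<open>auto intro!: mult_left_mono power_decreasing\<close>)
  also have "\<dots> \<le> (\<Sum>i\<le>M. real (M choose i) * q ^ i)"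
    by (rule sum_mono2) (use assms in auto)
  also have "\<dots> = (q + 1) ^ M"
    by (simp add: binomial_ring)
  also have "\<dots> \<le> exp q ^ M"
    by (rule power_mono) (use assms in \<open>auto simp: add.commute exp_ge_add_one_self\<close>)
  also have "\<dots> = exp (q * real M)"
    by (simp flip: exp_of_nat_mult add: mult.commute)
  finally show ?thesis .
qed

lemma le_exp_of_choose_sum_le_mult:
  fixes K l d M :: nat
  assumes "l + d < K"
    and le_mult: "choose_sum (int K) M \<le> choose_sum (int l) M * choose_sum (int d) M"
  shows "real M \<le> real K * exp (2 * real K / (real K - real l - real d))"
proof (cases "M < K")
  case True
  have "1 \<le> exp (2 * real K / (real K - real l - real d))"
    using assms(1) by simp
  then have "real K \<le> real K * exp (2 * real K / (real K - real l - real d))"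
    by (metis mult.right_neutral mult_left_mono of_nat_0_le_iff)
  then show ?thesis using True by linarith
next
  case False
  define S where "S = K - l - d"
  define q where "q = real K / real M"
  have S: "0 < S" "real K - real l - real d = real S" "K = S + l + d"
    using assms(1) by (auto simp: S_def)
  have q: "0 < q" "q \<le> 1" "q * real M = real K"
    using False assms(1) by (auto simp: q_def)
  have "(1 / q) ^ K \<le> real (M choose K)"
    using binomial_ge_n_over_k_pow_k[of K M] False by (simp add: q_def)
  also have "M choose K \<le> choose_sum (int K) M"
    by (simp add: choose_sum_eq_sum member_le_sum del: choose_sum.simps)
  finally have "(1 / q) ^ K * q ^ (l + d)
      \<le> (real (choose_sum (int l) M) * q ^ l) * (real (choose_sum (int d) M) * q ^ d)"
    using le_mult q(1) by (auto simp: power_add mult_ac intro!: mult_right_mono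
        order_trans[OF _ of_nat_mono[OF le_mult], simplified])
  also have "\<dots> \<le> exp (real K) * exp (real K)"
    using choose_sum_mult_power_le_exp[of q l M] choose_sum_mult_power_le_exp[of q d M]
      q False assms(1) by (intro mult_mono) auto
  finally have "(1 / q) ^ S \<le> exp (2 * real K)"
    using q(1) S(3) by (simp add: power_add field_simps flip: exp_add)
  also have "\<dots> = exp (2 * real K / real S) ^ S"
    using S(1) by (simp flip: exp_of_nat_mult)
  finally have "(1 / q) ^ S \<le> exp (2 * real K / real S) ^ S" .
  then have "1 / q \<le> exp (2 * real K / real S)"
    by (metis S(1) Suc_pred exp_ge_zero power_le_imp_le_base)
  then show ?thesis
    using q S by (simp add: q_def field_simps)
qed

section \<open>Littlestone dimension\<close>

lemma lbranches_nonempty: "lbranches t \<noteq> {}"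
  by (induction t) auto

lemma lshattered_LLeaf: "lshattered A LLeaf \<longleftrightarrow> A \<noteq> {}"
  unfolding lshattered_def by auto

lemma lshattered_LNode:
  "lshattered A (LNode x l r) \<longleftrightarrow> lshattered {h\<in>A. h x = -1} l \<and> lshattered {h\<in>A. h x = 1} r"
proof
  assume shattered: "lshattered A (LNode x l r)"
  show "lshattered {h\<in>A. h x = -1} l \<and> lshattered {h\<in>A. h x = 1} r"
    unfolding lshattered_def
  proof (intro conjI ballI)
    fix p assume "p \<in> lbranches l"
    then have "(x, -1) # p \<in> lbranches (LNode x l r)" by auto
    then obtain h where "h \<in> A" "\<forall>(a, b)\<in>set ((x, -1) # p). h a = b"
      using shattered unfolding lshattered_def by blast
    then show "\<exists>h\<in>{h\<in>A. h x = -1}. \<forall>(a, b)\<in>set p. h a = b" by auto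
  next
    fix p assume "p \<in> lbranches r"
    then have "(x, 1) # p \<in> lbranches (LNode x l r)" by auto
    then obtain h where "h \<in> A" "\<forall>(a, b)\<in>set ((x, 1) # p). h a = b"
      using shattered unfolding lshattered_def by blast
    then show "\<exists>h\<in>{h\<in>A. h x = 1}. \<forall>(a, b)\<in>set p. h a = b" by auto
  qed
next
  assume halves: "lshattered {h\<in>A. h x = -1} l \<and> lshattered {h\<in>A. h x = 1} r"
  show "lshattered A (LNode x l r)"
    unfolding lshattered_def
  proof
    fix q assume "q \<in> lbranches (LNode x l r)"
    then consider p where "p \<in> lbranches l" "q = (x, -1) # p"
      | p where "p \<in> lbranches r" "q = (x, 1) # p"
      by auto
    then show "\<exists>h\<in>A. \<forall>(a, b)\<in>set q. h a = b"
      using halves unfolding lshattered_def by cases fastforce+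
  qed
qed

lemma lcomplete_LLeaf: "lcomplete n LLeaf \<longleftrightarrow> n = 0"
  unfolding lcomplete_def by auto

lemma lcomplete_LNode:
  "lcomplete n (LNode x l r) \<longleftrightarrow> (\<exists>n'. n = Suc n' \<and> lcomplete n' l \<and> lcomplete n' r)"
proof
  assume complete: "lcomplete n (LNode x l r)"
  obtain p where "p \<in> lbranches l"
    using lbranches_nonempty by blast
  then have "(x, -1) # p \<in> lbranches (LNode x l r)"
    by auto
  then have "length ((x, -1) # p) = n"
    using complete unfolding lcomplete_def by blast
  then obtain n' where n: "n = Suc n'" by auto
  have "length q = n'" if "q \<in> lbranches l \<or> q \<in> lbranches r" for q
  proof -
    from that have "(x, -1) # q \<in> lbranches (LNode x l r) \<or> (x, 1) # q \<in> lbranches (LNode x l r)"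
      by auto
    then show ?thesis
      using complete n unfolding lcomplete_def by fastforce
  qed
  then have "lcomplete n' l" "lcomplete n' r"
    unfolding lcomplete_def by blast+
  then show "\<exists>n'. n = Suc n' \<and> lcomplete n' l \<and> lcomplete n' r"
    using n by blast
qed (auto simp: lcomplete_def)

lemma enat_le_Ldim: "lcomplete n t \<Longrightarrow> lshattered A t \<Longrightarrow> enat n \<le> Ldim A"
  unfolding Ldim_def by (rule Sup_upper) blast

lemma Ldim_mono:
  assumes "A \<subseteq> B"
  shows "Ldim A \<le> Ldim B"
proof -
  have "lshattered B t" if "lshattered A t" for t
    using that assms unfolding lshattered_def by blast
  then show ?thesis
    unfolding Ldim_def by (intro Sup_subset_mono) blast
qed

lemma Ldim_attained:
  assumes "A \<noteq> {}" "Ldim A = enat n"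
  shows "\<exists>t. lcomplete n t \<and> lshattered A t"
proof -
  define S where "S = {enat n |n. \<exists>t. lcomplete n t \<and> lshattered A t}"
  have "enat 0 \<in> S"
    unfolding S_def using assms(1) by (auto simp: lcomplete_LLeaf lshattered_LLeaf intro!: exI[of _ LLeaf])
  moreover have "Sup S = enat n"
    using assms(2) by (simp add: Ldim_def S_def)
  ultimately have "finite S" "Max S = enat n"
    unfolding Sup_enat_def by (auto split: if_splits)
  then have "enat n \<in> S"
    using \<open>enat 0 \<in> S\<close> Max_in by fastforce
  then show ?thesis
    unfolding S_def by auto
qed

text \<open>For an empty class the Sup convention gives Littlestone dimension 0 rather than -1;
  the potential treats that case separately.\<close>
definition ldim_potential :: "('x \<Rightarrow> int) set \<Rightarrow> nat \<Rightarrow> nat" where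
  "ldim_potential A m = (if A = {} then 0 else choose_sum (int (the_enat (Ldim A))) m)"

lemma Ldim_subset_enat:
  assumes "B \<subseteq> A" "Ldim A = enat n"
  obtains n' where "Ldim B = enat n'" "n' \<le> n"
proof -
  have "Ldim B \<le> enat n"
    using Ldim_mono[OF assms(1)] assms(2) by simp
  then show ?thesis
    using that by (cases "Ldim B") auto
qed

lemma Ldim_split_less:
  assumes Ldim: "Ldim A = enat n"
    and nonempty: "{h\<in>A. h x = 1} \<noteq> {}" "{h\<in>A. h x = -1} \<noteq> {}"
  shows "Ldim {h\<in>A. h x = 1} < enat n \<or> Ldim {h\<in>A. h x = -1} < enat n"
proof (rule ccontr)
  let ?A1 = "{h\<in>A. h x = 1}" and ?A0 = "{h\<in>A. h x = -1}"
  assume "\<not> ?thesis"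
  then have "Ldim ?A1 = enat n" "Ldim ?A0 = enat n"
    using Ldim_mono[of ?A1 A] Ldim_mono[of ?A0 A] Ldim by auto
  then obtain t1 t0 where "lcomplete n t1" "lshattered ?A1 t1" "lcomplete n t0" "lshattered ?A0 t0"
    using Ldim_attained[OF nonempty(1)] Ldim_attained[OF nonempty(2)] by blast
  then have "enat (Suc n) \<le> Ldim A"
    by (intro enat_le_Ldim[of _ "LNode x t0 t1"]) (auto simp: lcomplete_LNode lshattered_LNode)
  then show False
    using Ldim by simp
qed

lemma ldim_potential_le_choose_sum:
  assumes "Ldim B = enat n" "B = {} \<or> int n \<le> r"
  shows "ldim_potential B m \<le> choose_sum r m"
  using assms choose_sum_mono[of "int n" r m] by (auto simp: ldim_potential_def)

text \<open>As in the analysis of the standard optimal algorithm: one side of every split has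
  smaller Littlestone dimension, so the potential obeys Pascal's rule.\<close>
lemma ldim_potential_split:
  assumes finite: "Ldim A \<noteq> \<infinity>"
  shows "ldim_potential {h\<in>A. h x = 1} m + ldim_potential {h\<in>A. h x = -1} m
    \<le> ldim_potential A (Suc m)"
proof (cases "A = {}")
  case True
  then show ?thesis by (simp add: ldim_potential_def)
next
  case False
  let ?A1 = "{h\<in>A. h x = 1}" and ?A0 = "{h\<in>A. h x = -1}"
  obtain n where Ldim: "Ldim A = enat n"
    using finite by auto
  obtain n1 where A1: "Ldim ?A1 = enat n1" "n1 \<le> n"
    using Ldim_subset_enat[of ?A1 A n] Ldim by blast
  obtain n0 where A0: "Ldim ?A0 = enat n0" "n0 \<le> n"
    using Ldim_subset_enat[of ?A0 A n] Ldim by blast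
  have "(?A1 = {} \<or> n1 < n) \<or> (?A0 = {} \<or> n0 < n)"
  proof (cases "?A1 = {} \<or> ?A0 = {}")
    case False
    then have "Ldim ?A1 < enat n \<or> Ldim ?A0 < enat n"
      using Ldim_split_less[OF Ldim] by blast
    then show ?thesis
      unfolding A1(1) A0(1) by auto
  qed blast
  then consider "?A1 = {} \<or> n1 < n" | "?A0 = {} \<or> n0 < n"
    by blast
  then have "ldim_potential ?A1 m + ldim_potential ?A0 m \<le> choose_sum (int n) m + choose_sum (int n - 1) m"
  proof cases
    case 1
    then have "ldim_potential ?A1 m \<le> choose_sum (int n - 1) m"
      by (intro ldim_potential_le_choose_sum[OF A1(1)]) auto
    moreover have "ldim_potential ?A0 m \<le> choose_sum (int n) m"
      using A0 by (intro ldim_potential_le_choose_sum[OF A0(1)]) simp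
    ultimately show ?thesis
      by linarith
  next
    case 2
    then have "ldim_potential ?A0 m \<le> choose_sum (int n - 1) m"
      by (intro ldim_potential_le_choose_sum[OF A0(1)]) auto
    moreover have "ldim_potential ?A1 m \<le> choose_sum (int n) m"
      using A1 by (intro ldim_potential_le_choose_sum[OF A1(1)]) simp
    ultimately show ?thesis
      by linarith
  qed
  also have "\<dots> = ldim_potential A (Suc m)"
    using False Ldim by (simp add: ldim_potential_def)
  finally show ?thesis .
qed

section \<open>Counting the frontier of an extended mistake tree\<close>

fun frontier_size :: "'x etree \<Rightarrow> nat \<Rightarrow> nat" where
  "frontier_size (ELeaf h) m = 1"
| "frontier_size (ENode x b l r) 0 = 1"
| "frontier_size (ENode x b l r) (Suc m) = frontier_size l m + frontier_size r m"

lemma frontier_size_pos: "1 \<le> frontier_size t m"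
proof (induction t arbitrary: m)
  case (ENode x b l r)
  show ?case
  proof (cases m)
    case (Suc m')
    have "1 \<le> frontier_size l m'" by (rule ENode.IH(1))
    then show ?thesis using Suc by simp
  qed simp
qed simp

lemma difficult_ELeaf: "difficult k M (ELeaf h) \<Longrightarrow> M = 0"
  unfolding difficult_def by (simp add: num_solid_def)

lemma difficult_dashed_child:
  assumes "difficult j M (ENode x b l r)"
  shows "difficult j (M - 1) (if b then r else l)"
  unfolding difficult_def
proof (intro ballI impI)
  fix p assume "p \<in> epaths (if b then r else l)" "num_solid p \<le> j"
  then have "Dashed # p \<in> epaths (ENode x b l r)" "num_solid (Dashed # p) \<le> j"
    by (auto simp: num_solid_def)
  then have "M \<le> length (Dashed # p)"
    using assms unfolding difficult_def by blast
  then show "M - 1 \<le> length p" by simp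
qed

lemma difficult_solid_child:
  assumes "difficult (Suc j) M (ENode x b l r)"
  shows "difficult j (M - 1) (if b then l else r)"
  unfolding difficult_def
proof (intro ballI impI)
  let ?e = "if b then SolidL else SolidR"
  fix p assume "p \<in> epaths (if b then l else r)" "num_solid p \<le> j"
  then have "?e # p \<in> epaths (ENode x b l r)" "num_solid (?e # p) \<le> Suc j"
    by (auto simp: num_solid_def)
  then have "M \<le> length (?e # p)"
    using assms unfolding difficult_def by blast
  then show "M - 1 \<le> length p" by simp
qed

text \<open>Following the dashed edge is free, so the budget j of solid edges gives Pascal's rule.\<close>
lemma choose_sum_le_frontier_size:
  "difficult j M t \<Longrightarrow> m \<le> M \<Longrightarrow> choose_sum (int j + 1) m \<le> frontier_size t m"
proof (induction t arbitrary: j m M)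
  case (ELeaf h)
  then show ?case using difficult_ELeaf by fastforce
next
  case (ENode x b l r)
  show ?case
  proof (cases m)
    case 0
    then show ?thesis by simp
  next
    case (Suc m')
    let ?dashed = "if b then r else l" and ?other = "if b then l else r"
    have dashed: "choose_sum (int j + 1) m' \<le> frontier_size ?dashed m'"
      using ENode.IH difficult_dashed_child[OF ENode.prems(1)] ENode.prems(2) Suc by (cases b) auto
    have other: "choose_sum (int j) m' \<le> frontier_size ?other m'"
    proof (cases j)
      case 0
      then show ?thesis using frontier_size_pos[of ?other m'] by (simp add: choose_sum_eq_sum[of 0, simplified])
    next
      case (Suc j')
      then have "difficult j' (M - 1) ?other"
        using difficult_solid_child[of j' M x b l r] ENode.prems(1) by blast
      then have "choose_sum (int j' + 1) m' \<le> frontier_size ?other m'"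
        using ENode.IH ENode.prems(2) \<open>m = Suc m'\<close> by (cases b) auto
      then show ?thesis
        using Suc by (simp only: of_nat_Suc add.commute)
    qed
    have "frontier_size (ENode x b l r) m = frontier_size ?dashed m' + frontier_size ?other m'"
      using Suc by (cases b) auto
    then show ?thesis
      using dashed other Suc by simp
  qed
qed

text \<open>Bounds the depth-m frontier below the node reached along the labelled points cs:
  hypotheses of A agreeing with a label keep their budget r of flips by C^l, the others
  spend one.\<close>
fun flip_potential :: "('x \<Rightarrow> int) set \<Rightarrow> int \<Rightarrow> ('x \<times> int) list \<Rightarrow> nat \<Rightarrow> nat" where
  "flip_potential A r [] m = choose_sum r m * ldim_potential A m"
| "flip_potential A r ((x, y) # cs) m =
     flip_potential {h\<in>A. h x = y} r cs m + flip_potential {h\<in>A. h x \<noteq> y} (r - 1) cs m"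

lemma flip_potential_split:
  assumes "Ldim A \<noteq> \<infinity>" "\<forall>h\<in>A. \<forall>x. h x \<in> {-1, 1}"
  shows "flip_potential A r ((x, 1) # cs) m + flip_potential A r ((x, -1) # cs) m
    \<le> flip_potential A r cs (Suc m)"
  using assms
proof (induction cs arbitrary: A r)
  case Nil
  have halves: "{h\<in>A. h x \<noteq> 1} = {h\<in>A. h x = -1}" "{h\<in>A. h x \<noteq> -1} = {h\<in>A. h x = 1}"
    using Nil.prems(2) by auto
  have "flip_potential A r [(x, 1)] m + flip_potential A r [(x, -1)] m
      = (choose_sum r m + choose_sum (r - 1) m)
        * (ldim_potential {h\<in>A. h x = 1} m + ldim_potential {h\<in>A. h x = -1} m)"
    by (simp add: halves algebra_simps)
  also have "\<dots> \<le> (choose_sum r m + choose_sum (r - 1) m) * ldim_potential A (Suc m)"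
    using ldim_potential_split[OF Nil.prems(1)] by (rule mult_left_mono) simp
  finally show ?case by simp
next
  case (Cons c cs)
  obtain z w where c: "c = (z, w)" by (cases c)
  have sub: "Ldim B \<noteq> \<infinity>" "\<forall>h\<in>B. \<forall>x. h x \<in> {-1, 1}" if "B \<subseteq> A" for B
    using that Cons.prems Ldim_mono[OF that] by (auto dest: enat_ile)
  have "flip_potential {h\<in>A. h z = w} r ((x, 1) # cs) m + flip_potential {h\<in>A. h z = w} r ((x, -1) # cs) m
      \<le> flip_potential {h\<in>A. h z = w} r cs (Suc m)"
    by (rule Cons.IH) (use sub[of "{h\<in>A. h z = w}"] in auto)
  moreover have "flip_potential {h\<in>A. h z \<noteq> w} (r - 1) ((x, 1) # cs) m
      + flip_potential {h\<in>A. h z \<noteq> w} (r - 1) ((x, -1) # cs) m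
      \<le> flip_potential {h\<in>A. h z \<noteq> w} (r - 1) cs (Suc m)"
    by (rule Cons.IH) (use sub[of "{h\<in>A. h z \<noteq> w}"] in auto)
  ultimately show ?case
    by (simp add: c conj_ac)
qed

lemma flip_potential_pos:
  "h \<in> A \<Longrightarrow> int (length (filter (\<lambda>(x, y). h x \<noteq> y) cs)) \<le> r \<Longrightarrow> 1 \<le> flip_potential A r cs m"
proof (induction cs arbitrary: A r)
  case Nil
  then have "1 \<le> choose_sum r m" "1 \<le> ldim_potential A m"
    using choose_sum_pos by (auto simp: ldim_potential_def)
  then show ?case by simp
next
  case (Cons c cs)
  obtain x y where c: "c = (x, y)" by (cases c)
  show ?case
  proof (cases "h x = y")
    case True
    then have "1 \<le> flip_potential {h\<in>A. h x = y} r cs m"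
      using Cons by (intro Cons.IH) (auto simp: c)
    then show ?thesis by (simp add: c)
  next
    case False
    then have "1 \<le> flip_potential {h\<in>A. h x \<noteq> y} (r - 1) cs m"
      using Cons by (intro Cons.IH) (auto simp: c)
    then show ?thesis by (simp add: c)
  qed
qed

lemma flip_potential_pos_Hl:
  assumes g: "g \<in> Hl H l" and consistent: "\<forall>(x, y)\<in>set cs. g x = y"
    and distinct: "distinct (map fst cs)"
  shows "1 \<le> flip_potential H (int l) cs m"
proof -
  obtain h D where h: "h \<in> H" and D: "finite D" "card D \<le> l"
    and g_eq: "g = (\<lambda>x. h x * (1 - 2 * (if x \<in> D then 1 else 0)))"
    using g unfolding Hl_def Cl_def by blast
  define flipped where "flipped = filter (\<lambda>(x, y). h x \<noteq> y) cs"
  have "set (map fst flipped) \<subseteq> D"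
  proof
    fix x assume "x \<in> set (map fst flipped)"
    then obtain y where "(x, y) \<in> set cs" "h x \<noteq> y"
      by (auto simp: flipped_def)
    then show "x \<in> D"
      using consistent g_eq by (cases "x \<in> D") auto
  qed
  then have "card (set (map fst flipped)) \<le> l"
    using card_mono[OF D(1)] D(2) le_trans by blast
  moreover have "distinct (map fst flipped)"
    using distinct by (simp add: flipped_def distinct_map_filter)
  ultimately have "length flipped \<le> l"
    by (metis distinct_card length_map)
  then show ?thesis
    using flip_potential_pos[OF h] by (simp add: flipped_def)
qed

lemma evalid_consistent: "evalid F cs t \<Longrightarrow> \<exists>g\<in>F. \<forall>(x, y)\<in>set cs. g x = y"
proof (induction t arbitrary: cs)
  case (ENode x b l r)
  then obtain g where "g \<in> F" "\<forall>(a, c)\<in>set ((x, -1) # cs). g a = c" by fastforce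
  then show ?case by auto
qed auto

lemma evalid_ENode_fresh: "evalid F cs (ENode x b l r) \<Longrightarrow> x \<notin> fst ` set cs"
proof
  assume valid: "evalid F cs (ENode x b l r)" and "x \<in> fst ` set cs"
  then obtain y where "(x, y) \<in> set cs"
    by auto
  moreover obtain g1 g2 where "\<forall>(a, c)\<in>set ((x, -1) # cs). g1 a = c"
    "\<forall>(a, c)\<in>set ((x, 1) # cs). g2 a = c"
    using valid evalid_consistent[of F "(x, -1) # cs" l] evalid_consistent[of F "(x, 1) # cs" r]
    by auto
  ultimately show False
    by fastforce
qed

lemma frontier_size_le_flip_potential:
  assumes "\<forall>h\<in>H. \<forall>x. h x \<in> {-1, 1}" "Ldim H \<noteq> \<infinity>"
  shows "evalid (Hl H l) cs t \<Longrightarrow> distinct (map fst cs)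
    \<Longrightarrow> frontier_size t m \<le> flip_potential H (int l) cs m"
proof (induction t arbitrary: cs m)
  case (ELeaf g)
  then show ?case using flip_potential_pos_Hl[of g H l cs m] by simp
next
  case (ENode x b lt rt)
  show ?case
  proof (cases m)
    case 0
    obtain g where "g \<in> Hl H l" "\<forall>(x, y)\<in>set cs. g x = y"
      using evalid_consistent[OF ENode.prems(1)] by blast
    then show ?thesis
      using flip_potential_pos_Hl[of g H l cs m] ENode.prems(2) 0 by simp
  next
    case (Suc m')
    have valid: "evalid (Hl H l) ((x, -1) # cs) lt" "evalid (Hl H l) ((x, 1) # cs) rt"
      using ENode.prems(1) by auto
    have fresh: "distinct (map fst ((x, y) # cs))" for y
      using evalid_ENode_fresh[OF ENode.prems(1)] ENode.prems(2) by simp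
    have "frontier_size lt m' \<le> flip_potential H (int l) ((x, -1) # cs) m'"
      "frontier_size rt m' \<le> flip_potential H (int l) ((x, 1) # cs) m'"
      using ENode.IH(1)[OF valid(1) fresh] ENode.IH(2)[OF valid(2) fresh] by auto
    then show ?thesis
      using flip_potential_split[OF assms(2,1), of "int l" x cs m'] Suc by simp
  qed
qed

lemma choose_sum_le_of_difficult_Hl:
  assumes "\<forall>h\<in>H. \<forall>x. h x \<in> {-1, 1}" "Ldim H = enat d"
    and "ext_mistake_tree (Hl H l) t" "difficult k M t"
  shows "choose_sum (int k + 1) M \<le> choose_sum (int l) M * choose_sum (int d) M"
proof -
  have "choose_sum (int k + 1) M \<le> frontier_size t M"
    using choose_sum_le_frontier_size[OF assms(4)] by simp
  also have "\<dots> \<le> flip_potential H (int l) [] M"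
    using frontier_size_le_flip_potential[OF assms(1), of l "[]" t M] assms(2,3)
    by (simp add: ext_mistake_tree_def)
  also have "\<dots> \<le> choose_sum (int l) M * choose_sum (int d) M"
    using assms(2) by (simp add: ldim_potential_def)
  finally show ?thesis .
qed

lemma ereal_of_enat_ELdim_le:
  assumes "0 \<le> B" and bound: "\<And>m t. ext_mistake_tree F t \<Longrightarrow> difficult k m t \<Longrightarrow> real m \<le> B"
  shows "ereal_of_enat (ELdim F k) \<le> ereal B"
proof -
  have "ELdim F k \<le> enat (nat \<lfloor>B\<rfloor>)"
    unfolding ELdim_def
  proof (rule Sup_least)
    fix y assume "y \<in> {enat m |m. \<exists>t. ext_mistake_tree F t \<and> difficult k m t}"
    then obtain m t where "y = enat m" "ext_mistake_tree F t" "difficult k m t"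
      by blast
    then show "y \<le> enat (nat \<lfloor>B\<rfloor>)"
      using bound by (simp add: le_nat_floor)
  qed
  then have "ereal_of_enat (ELdim F k) \<le> ereal (real (nat \<lfloor>B\<rfloor>))"
    by (simp add: ereal_of_enat_le_iff[symmetric])
  also have "real (nat \<lfloor>B\<rfloor>) \<le> B"
    using assms(1) by simp
  finally show ?thesis
    by simp
qed

theorem mainTheorem6:
  fixes H :: "('x \<Rightarrow> int) set" and d k l :: nat
  assumes "\<forall>h\<in>H. \<forall>x. h x \<in> {-1, 1}"
    and "Ldim H = enat d"
    and "k \<ge> l + d"
  shows "ereal_of_enat (ELdim (Hl H l) k)
           \<le> ereal ((real k + 1) * exp ((2 * real k + 2) / (real k + 1 - real l - real d)))"
proof (rule ereal_of_enat_ELdim_le)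
  fix m t
  assume "ext_mistake_tree (Hl H l) t" "difficult k m t"
  then have "choose_sum (int k + 1) m \<le> choose_sum (int l) m * choose_sum (int d) m"
    by (rule choose_sum_le_of_difficult_Hl[OF assms(1,2)])
  then have "real m \<le> real (Suc k) * exp (2 * real (Suc k) / (real (Suc k) - real l - real d))"
    by (intro le_exp_of_choose_sum_le_mult) (use assms(3) in \<open>auto simp: add.commute\<close>)
  then show "real m \<le> (real k + 1) * exp ((2 * real k + 2) / (real k + 1 - real l - real d))"
    by (simp add: algebra_simps)
qed simp

end
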